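(* Let $\varphi\neq0$ and $\phi$ be real numbers and $$M_A=\begin{pmatrix} i\cosh\varphi & e^{i\phi}\sinh\varphi\\ e^{-i\phi}\sinh\varphi & -i\cosh\varphi\end{pmatrix},\qquad M_B=\begin{pmatrix} i&0\\0&-i\end{pmatrix}.$$ Let $M_1,M_2,\dots$ be independent random matrices, each equal to $M_A$ or $M_B$ with probability $1/2$, and let $\Pi_n=M_1\cdots M_n$. Then the Lyapunov exponent vanishes: $$\lambda_L=\lim_{n\to\infty}\frac1n\mathbb{E}\left(\log\|\Pi_n\|_F\right)=0.$$
   Context: $\|\cdot\|_F$ is the Frobenius norm, $\|M\|_F=(\sum_{i,j}|M_{ij}|^2)^{1/2}$. $\mathbb{E}$ denotes expectation over the random choices of $M_1,\dots,M_n$. *)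

theory Defs
  imports "HOL-Analysis.Analysis"
begin

definition frob :: "complex^2^2 \<Rightarrow> real" where
  "frob M = sqrt (\<Sum>i\<in>UNIV. \<Sum>j\<in>UNIV. (cmod (M $ i $ j))\<^sup>2)"

definition MA :: "real \<Rightarrow> real \<Rightarrow> complex^2^2" where
  "MA \<phi>h \<phi> = (\<chi> i j.
     if i = 1 \<and> j = 1 then \<i> * of_real (cosh \<phi>h)
     else if i = 1 \<and> j = 2 then cis \<phi> * of_real (sinh \<phi>h)
     else if i = 2 \<and> j = 1 then cis (- \<phi>) * of_real (sinh \<phi>h)
     else - \<i> * of_real (cosh \<phi>h))"

definition MB :: "complex^2^2" where
  "MB = (\<chi> i j. if i = 1 \<and> j = 1 then \<i> else if i = 2 \<and> j = 2 then - \<i> else 0)"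

text \<open>Product M_1 ... M_n for a choice sequence (True = M_A, False = M_B), M_1 = head.\<close>
definition prodM :: "real \<Rightarrow> real \<Rightarrow> bool list \<Rightarrow> complex^2^2" where
  "prodM \<phi>h \<phi> xs = foldr (\<lambda>b P. (if b then MA \<phi>h \<phi> else MB) ** P) xs (mat 1)"

text \<open>Expectation of log of the Frobenius norm of the product over n i.i.d. fair choices:
  uniform average over all 2^n choice sequences of length n.\<close>
definition Elog :: "real \<Rightarrow> real \<Rightarrow> nat \<Rightarrow> real" where
  "Elog \<phi>h \<phi> n = (\<Sum>xs\<in>{xs::bool list. length xs = n}. ln (frob (prodM \<phi>h \<phi> xs))) / 2 ^ n"

end

theory Submission
  imports Defs "HOL-Real_Asymp.Real_Asymp"
begin

text \<open>Both \<open>M\<^sub>A\<close> and \<open>M\<^sub>B\<close> have trace 0 and determinant 1, so each squares to \<open>-1\<close>.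
  Hence a product of \<open>M\<^sub>A\<close>'s and \<open>M\<^sub>B\<close>'s equals, up to sign, the product of the word obtained by
  cancelling adjacent equal letters. Prepending a fair random letter to a word moves the length
  \<open>\<ell>\<close> of its reduced word to \<open>\<ell> \<plusminus> 1\<close> with equal probability (and from 0 to 1), so
  \<open>\<ell>\<^sup>2 - n\<close> is a martingale: \<open>\<bbbE> \<ell>\<^sub>n\<^sup>2 = n\<close> and \<open>\<bbbE> \<ell>\<^sub>n \<le> \<surd>n\<close>. The Frobenius norm is
  submultiplicative and at least 1 on matrices of determinant 1, so
  \<open>0 \<le> log \<parallel>\<Pi>\<^sub>n\<parallel> \<le> log \<surd>2 + \<ell>\<^sub>n log K\<close> and \<open>\<bbbE> log \<parallel>\<Pi>\<^sub>n\<parallel> = O(\<surd>n)\<close>.\<close>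

lemma matrix_mul_uminus_left:
  fixes A :: "'a::ring_1^'n^'m" and B :: "'a^'p^'n"
  shows "(- A) ** B = - (A ** B)"
  by (simp add: vec_eq_iff matrix_matrix_mult_def sum_negf)

lemma matrix_mul_uminus_right:
  fixes A :: "'a::ring_1^'n^'m" and B :: "'a^'p^'n"
  shows "A ** (- B) = - (A ** B)"
  by (simp add: vec_eq_iff matrix_matrix_mult_def sum_negf)

lemma matrix_mul_self_eq_neg_mat1_2:
  fixes M :: "'a::comm_ring_1^2^2"
  assumes "trace M = 0" and "det M = 1"
  shows "M ** M = - mat 1"
proof -
  have d: "M$2$2 = - M$1$1" using assms(1) by (simp add: trace_def sum_2 eq_neg_iff_add_eq_0 add.commute)
  have bc: "M$1$2 * M$2$1 = - (M$1$1 * M$1$1) - 1" using assms(2) d by (simp add: det_2 algebra_simps)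
  show ?thesis
    by (simp add: vec_eq_iff forall_2 matrix_matrix_mult_def sum_2 mat_def d bc mult.commute[of "M$2$1"])
qed

lemma norm_matrix_eq_sqrt_sum:
  fixes M :: "'a::real_normed_vector^'n^'m"
  shows "norm M = sqrt (\<Sum>i\<in>UNIV. \<Sum>j\<in>UNIV. (norm (M $ i $ j))\<^sup>2)"
  by (simp add: norm_vec_def L2_set_def sum_nonneg)

lemma power2_norm_matrix:
  fixes M :: "'a::real_normed_vector^'n^'m"
  shows "(norm M)\<^sup>2 = (\<Sum>i\<in>UNIV. \<Sum>j\<in>UNIV. (norm (M $ i $ j))\<^sup>2)"
  by (simp add: norm_matrix_eq_sqrt_sum sum_nonneg)

lemma frob_eq_norm: "frob M = norm M"
  by (simp add: frob_def norm_matrix_eq_sqrt_sum)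

lemma norm_det_le_2:
  fixes M :: "'a::real_normed_field^2^2"
  shows "2 * norm (det M) \<le> (norm M)\<^sup>2"
proof -
  have det_le: "norm (det M) \<le> norm (M$1$1) * norm (M$2$2) + norm (M$1$2) * norm (M$2$1)"
    unfolding det_2 by (rule order_trans[OF norm_triangle_ineq4]) (simp add: norm_mult)
  have am_gm: "2 * (x * y) \<le> x\<^sup>2 + y\<^sup>2" for x y :: real
    by (simp only: mult.assoc[symmetric] sum_squares_bound)
  have "(norm M)\<^sup>2 = (norm (M$1$1))\<^sup>2 + (norm (M$2$2))\<^sup>2 + ((norm (M$1$2))\<^sup>2 + (norm (M$2$1))\<^sup>2)"
    by (simp add: power2_norm_matrix sum_2 algebra_simps)
  then show ?thesis
    using det_le am_gm[of "norm (M$1$1)" "norm (M$2$2)"] am_gm[of "norm (M$1$2)" "norm (M$2$1)"]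
    by linarith
qed

lemma one_le_norm_if_det_eq_1:
  fixes M :: "'a::real_normed_field^2^2"
  assumes "det M = 1"
  shows "1 \<le> norm M"
proof -
  have "1\<^sup>2 \<le> (norm M)\<^sup>2"
    using norm_det_le_2[of M] assms by simp
  then show ?thesis
    by (rule power2_le_imp_le) simp
qed

fun reduce_word :: "'a list \<Rightarrow> 'a list" where
  "reduce_word [] = []"
| "reduce_word (x # xs) =
     (case reduce_word xs of [] \<Rightarrow> [x] | y # ys \<Rightarrow> if x = y then ys else x # y # ys)"

definition word_prod :: "('a \<Rightarrow> 'b::semiring_1^'n^'n) \<Rightarrow> 'a list \<Rightarrow> 'b^'n^'n" where
  "word_prod M xs = foldr (\<lambda>x P. M x ** P) xs (mat 1)"

lemma word_prod_Nil [simp]: "word_prod M [] = mat 1"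
  by (simp add: word_prod_def)

lemma word_prod_Cons [simp]: "word_prod M (x # xs) = M x ** word_prod M xs"
  by (simp add: word_prod_def)

lemma det_word_prod:
  fixes M :: "'a \<Rightarrow> 'b::comm_ring_1^'n^'n"
  assumes "\<And>x. det (M x) = 1"
  shows "det (word_prod M xs) = 1"
  by (induction xs) (simp_all add: det_mul assms det_I)

lemma word_prod_reduce_word:
  fixes M :: "'a \<Rightarrow> 'b::ring_1^'n^'n"
  assumes "\<And>x. M x ** M x = - mat 1"
  shows "word_prod M xs = word_prod M (reduce_word xs) \<or> word_prod M xs = - word_prod M (reduce_word xs)"
proof (induction xs)
  case Nil
  then show ?case by simp
next
  case (Cons x xs)
  have "M x ** word_prod M (reduce_word xs) = word_prod M (reduce_word (x # xs)) \<or>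
        M x ** word_prod M (reduce_word xs) = - word_prod M (reduce_word (x # xs))"
  proof (cases "reduce_word xs")
    case (Cons y ys)
    have "M x ** (M x ** P) = - P" for P
      by (simp add: matrix_mul_assoc assms matrix_mul_uminus_left)
    with Cons show ?thesis by auto
  qed simp
  with Cons.IH show ?case
    by (auto simp: matrix_mul_uminus_right)
qed

lemma norm_matrix_mult_le:
  fixes A :: "'a::real_normed_algebra_1^'n^'m" and B :: "'a^'p^'n"
  shows "norm (A ** B) \<le> norm A * norm B"
proof -
  have entry: "norm ((A ** B) $ i $ j) \<le> norm (A $ i) * norm (column j B)" for i j
  proof -
    have "norm ((A ** B) $ i $ j) \<le> (\<Sum>k\<in>UNIV. \<bar>norm (A $ i $ k)\<bar> * \<bar>norm (B $ k $ j)\<bar>)"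
      unfolding matrix_matrix_mult_def
      by (auto intro!: order_trans[OF norm_sum] sum_mono norm_mult_ineq)
    also have "\<dots> \<le> norm (A $ i) * norm (column j B)"
      unfolding norm_vec_def column_def by (rule L2_set_mult_ineq[THEN order_trans]) simp
    finally show ?thesis .
  qed
  have "(norm (A ** B))\<^sup>2 = (\<Sum>i\<in>UNIV. \<Sum>j\<in>UNIV. (norm ((A ** B) $ i $ j))\<^sup>2)"
    by (rule power2_norm_matrix)
  also have "\<dots> \<le> (\<Sum>i\<in>UNIV. \<Sum>j\<in>UNIV. (norm (A $ i))\<^sup>2 * (norm (column j B))\<^sup>2)"
    by (intro sum_mono) (metis entry norm_ge_zero power_mono power_mult_distrib)
  also have "\<dots> = (\<Sum>i\<in>UNIV. (norm (A $ i))\<^sup>2) * (\<Sum>j\<in>UNIV. (norm (column j B))\<^sup>2)"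
    by (simp add: sum_product)
  also have "(\<Sum>j\<in>UNIV. (norm (column j B))\<^sup>2) = (\<Sum>k\<in>UNIV. (norm (B $ k))\<^sup>2)"
    by (simp add: norm_vec_def L2_set_def sum_nonneg column_def) (rule sum.swap)
  also have "(\<Sum>i\<in>UNIV. (norm (A $ i))\<^sup>2) * (\<Sum>k\<in>UNIV. (norm (B $ k))\<^sup>2) = (norm A * norm B)\<^sup>2"
    by (simp add: norm_vec_def L2_set_def sum_nonneg power_mult_distrib)
  finally show ?thesis
    by (rule power2_le_imp_le) simp
qed

lemma norm_word_prod_le:
  fixes M :: "'a \<Rightarrow> 'b::real_normed_algebra_1^'n^'n"
  assumes "\<And>x. norm (M x) \<le> K"
  shows "norm (word_prod M xs) \<le> norm (mat 1 :: 'b^'n^'n) * K ^ length xs"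
proof (induction xs)
  case (Cons x xs)
  have "norm (word_prod M (x # xs)) \<le> norm (M x) * norm (word_prod M xs)"
    by (simp add: norm_matrix_mult_le)
  also have "\<dots> \<le> K * (norm (mat 1 :: 'b^'n^'n) * K ^ length xs)"
    using Cons.IH assms[of x] order_trans[OF norm_ge_zero assms[of x]] by (intro mult_mono) simp_all
  finally show ?case by (simp add: algebra_simps)
qed simp

lemma sum_lists_length_Suc:
  fixes f :: "'a::finite list \<Rightarrow> 'b::comm_monoid_add"
  shows "(\<Sum>xs\<in>{xs. length xs = Suc n}. f xs) = (\<Sum>xs\<in>{xs. length xs = n}. \<Sum>x\<in>UNIV. f (x # xs))"
proof -
  have split: "{xs::'a list. length xs = Suc n} = (\<lambda>(xs, x). x # xs) ` ({xs. length xs = n} \<times> UNIV)"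
    using lists_length_Suc_eq[of UNIV n] by simp
  have "(\<Sum>xs\<in>{xs. length xs = Suc n}. f xs) = (\<Sum>(xs, x)\<in>{xs. length xs = n} \<times> UNIV. f (x # xs))"
    unfolding split by (subst sum.reindex) (auto simp: inj_split_Cons intro!: sum.cong)
  also have "\<dots> = (\<Sum>xs\<in>{xs. length xs = n}. \<Sum>x\<in>UNIV. f (x # xs))"
    by (rule sum.cartesian_product[symmetric])
  finally show ?thesis .
qed

lemma card_bool_lists_length: "card {xs::bool list. length xs = n} = 2 ^ n"
  using card_lists_length_eq[of "UNIV::bool set" n] by simp

lemma sum_length_reduce_word_Cons_sq:
  fixes xs :: "bool list"
  shows "(\<Sum>x\<in>UNIV. (length (reduce_word (x # xs)))\<^sup>2) = 2 * ((length (reduce_word xs))\<^sup>2 + 1)"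
proof (cases "reduce_word xs")
  case (Cons y ys)
  show ?thesis by (cases y) (simp_all add: Cons UNIV_bool power2_eq_square)
qed (simp add: UNIV_bool)

lemma sum_length_reduce_word_sq:
  "(\<Sum>xs\<in>{xs::bool list. length xs = n}. (length (reduce_word xs))\<^sup>2) = n * 2 ^ n"
proof (induction n)
  case 0
  have "{xs::bool list. length xs = 0} = {[]}" by auto
  then show ?case by simp
next
  case (Suc n)
  have "(\<Sum>xs\<in>{xs::bool list. length xs = Suc n}. (length (reduce_word xs))\<^sup>2)
      = (\<Sum>xs\<in>{xs::bool list. length xs = n}. 2 * ((length (reduce_word xs))\<^sup>2 + 1))"
    by (simp only: sum_lists_length_Suc sum_length_reduce_word_Cons_sq)
  also have "\<dots> = 2 * (n * 2 ^ n) + 2 * 2 ^ n"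
    by (simp only: sum_distrib_left[symmetric] sum.distrib Suc.IH) (simp add: card_bool_lists_length)
  finally show ?case by simp
qed

lemma sum_length_reduce_word_le:
  "(\<Sum>xs\<in>{xs::bool list. length xs = n}. real (length (reduce_word xs))) \<le> 2 ^ n * sqrt n"
proof -
  have "(\<Sum>xs\<in>{xs::bool list. length xs = n}. real (length (reduce_word xs)))\<^sup>2
      \<le> (\<Sum>xs\<in>{xs::bool list. length xs = n}. (real (length (reduce_word xs)))\<^sup>2) * 2 ^ n"
    using sum_squared_le_sum_of_squares[of "\<lambda>xs. real (length (reduce_word xs))" "{xs::bool list. length xs = n}"]
    by (simp add: card_bool_lists_length)
  also have "\<dots> = real n * 2 ^ n * 2 ^ n"
    using sum_length_reduce_word_sq[of n, THEN arg_cong[where f = real]] by simp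
  also have "\<dots> = (2 ^ n * sqrt n)\<^sup>2"
    by (simp add: power_mult_distrib power2_eq_square)
  finally show ?thesis
    by (rule power2_le_imp_le) simp
qed

lemma trace_MA: "trace (MA \<phi>h \<phi>) = 0"
  by (simp add: trace_def sum_2 MA_def)

lemma det_MA: "det (MA \<phi>h \<phi>) = 1"
proof -
  have "cosh \<phi>h * cosh \<phi>h - sinh \<phi>h * sinh \<phi>h = 1"
    using cosh_square_eq[of \<phi>h] by (simp add: power2_eq_square)
  then have "complex_of_real (cosh \<phi>h) * complex_of_real (cosh \<phi>h)
      - complex_of_real (sinh \<phi>h) * complex_of_real (sinh \<phi>h) = 1"
    by (metis of_real_1 of_real_diff of_real_mult)
  moreover have "cis \<phi> * cis (- \<phi>) = 1"
    by (simp add: cis_mult)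
  ultimately show ?thesis
    by (simp add: det_2 MA_def algebra_simps)
qed

lemma trace_MB: "trace MB = 0"
  by (simp add: trace_def sum_2 MB_def)

lemma det_MB: "det MB = 1"
  by (simp add: det_2 MB_def)

lemma frob_prodM_eq_norm_reduce_word:
  "frob (prodM \<phi>h \<phi> xs) = norm (word_prod (\<lambda>b. if b then MA \<phi>h \<phi> else MB) (reduce_word xs))"
proof -
  have square: "(if b then MA \<phi>h \<phi> else MB) ** (if b then MA \<phi>h \<phi> else MB) = - mat 1" for b
    by (cases b) (simp_all add: matrix_mul_self_eq_neg_mat1_2 trace_MA det_MA trace_MB det_MB)
  have "prodM \<phi>h \<phi> xs = word_prod (\<lambda>b. if b then MA \<phi>h \<phi> else MB) xs"
    by (simp add: prodM_def word_prod_def)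
  then show ?thesis
    using word_prod_reduce_word[of "\<lambda>b. if b then MA \<phi>h \<phi> else MB" xs, OF square]
    by (auto simp: frob_eq_norm)
qed

lemma one_le_frob_prodM: "1 \<le> frob (prodM \<phi>h \<phi> xs)"
  unfolding prodM_def frob_eq_norm
  by (rule one_le_norm_if_det_eq_1, fold word_prod_def) (simp add: det_word_prod det_MA det_MB)

lemma Elog_nonneg: "0 \<le> Elog \<phi>h \<phi> n"
  unfolding Elog_def by (simp add: sum_nonneg one_le_frob_prodM)

lemma Elog_le:
  assumes "norm (MA \<phi>h \<phi>) \<le> K" and "norm MB \<le> K"
  shows "Elog \<phi>h \<phi> n \<le> ln (sqrt 2) + ln K * sqrt n"
proof -
  have "1 \<le> K"
    using one_le_norm_if_det_eq_1[OF det_MB] assms(2) by linarith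
  have ln_frob_le: "ln (frob (prodM \<phi>h \<phi> xs)) \<le> ln (sqrt 2) + real (length (reduce_word xs)) * ln K"
    for xs
  proof -
    have "norm (mat 1 :: complex^2^2) = sqrt 2"
      by (simp add: norm_vec_def L2_set_def sum_2 mat_def)
    then have "frob (prodM \<phi>h \<phi> xs) \<le> sqrt 2 * K ^ length (reduce_word xs)"
      using norm_word_prod_le[of "\<lambda>b. if b then MA \<phi>h \<phi> else MB" K "reduce_word xs"] assms
      by (simp add: frob_prodM_eq_norm_reduce_word)
    then have "ln (frob (prodM \<phi>h \<phi> xs)) \<le> ln (sqrt 2 * K ^ length (reduce_word xs))"
      using one_le_frob_prodM[of \<phi>h \<phi> xs] \<open>1 \<le> K\<close> by (subst ln_le_cancel_iff) auto
    also have "\<dots> = ln (sqrt 2) + real (length (reduce_word xs)) * ln K"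
      using \<open>1 \<le> K\<close> by (simp add: ln_mult ln_realpow)
    finally show ?thesis .
  qed
  have "Elog \<phi>h \<phi> n \<le> (\<Sum>xs\<in>{xs::bool list. length xs = n}. ln (sqrt 2) + real (length (reduce_word xs)) * ln K) / 2 ^ n"
    unfolding Elog_def by (intro divide_right_mono sum_mono ln_frob_le) simp
  also have "\<dots> = ln (sqrt 2) + ln K * ((\<Sum>xs\<in>{xs::bool list. length xs = n}. real (length (reduce_word xs))) / 2 ^ n)"
    by (simp add: sum.distrib card_bool_lists_length sum_distrib_left field_simps)
  also have "\<dots> \<le> ln (sqrt 2) + ln K * sqrt n"
    using sum_length_reduce_word_le[of n] \<open>1 \<le> K\<close>
    by (intro add_left_mono mult_left_mono) (simp_all add: divide_le_eq mult.commute)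
  finally show ?thesis .
qed

theorem mainTheorem6:
  fixes \<phi>h \<phi> :: real
  assumes "\<phi>h \<noteq> 0"
  shows "(\<lambda>n. Elog \<phi>h \<phi> n / real n) \<longlonglongrightarrow> 0"
proof -
  define K where "K = max (norm (MA \<phi>h \<phi>)) (norm MB)"
  have upper: "Elog \<phi>h \<phi> n \<le> ln (sqrt 2) + ln K * sqrt n" for n
    by (rule Elog_le) (simp_all add: K_def)
  show ?thesis
  proof (rule tendsto_sandwich)
    show "\<forall>\<^sub>F n in sequentially. 0 \<le> Elog \<phi>h \<phi> n / real n"
      by (simp add: Elog_nonneg)
    show "\<forall>\<^sub>F n in sequentially. Elog \<phi>h \<phi> n / real n \<le> (ln (sqrt 2) + ln K * sqrt n) / real n"
      using upper by (simp add: divide_right_mono)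
    show "(\<lambda>n. (ln (sqrt 2) + ln K * sqrt n) / real n) \<longlonglongrightarrow> 0"
      by real_asymp
  qed simp
qed

end
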